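(* Let $n\ge1$. (1) The action of $N_{\Delta_n}\times N_{\Delta_n^*}\subset\mathbb{T}^{n+1}\times\mathbb{T}^{n+1}$ on $P$ is free and preserves $\tilde\omega_1,\tilde\omega_2,\tilde g,\tilde\omega_D$, and $\mu_1,\mu_2$ are invariant under it. (2) For $k_1<0$ and $k_2\in\mathbb{R}$, the set $\mu_1^{-1}(k_1)\cap\mu_2^{-1}(k_2)\subset P$ is nonempty if and only if $\frac{-k_1}{\pi}e^{\frac{4\pi}{n+1}k_2}\ge n+1$. (3) If $\frac{-k_1}{\pi}e^{\frac{4\pi}{n+1}k_2}> n+1$, then $d\mu_1\wedge d\mu_2\neq0$ at every point of $\mu_1^{-1}(k_1)\cap\mu_2^{-1}(k_2)$.
   Context: Write $\mathbb{T}^k=\mathbb{R}^k/\mathbb{Z}^k$. Let $u_i=e_i$ ($1\le i\le n$), $u_{n+1}=-(1,\dots,1)$, $v_i=(n+1)e_i-(1,\dots,1)$ ($1\le i\le n$), $v_{n+1}=-(1,\dots,1)$ in $\mathbb{R}^n$. Let $f_{\Delta_n},f_{\Delta_n^*}:\mathbb{T}^{n+1}\to\mathbb{T}^n$ be the homomorphisms induced by $x\mapsto\sum_ix_iu_i$ and $x\mapsto\sum_ix_iv_i$ respectively, $N_{\Delta_n}=\ker f_{\Delta_n}$, $N_{\Delta_n^*}=\ker f_{\Delta_n^*}$. Let $P=(\mathbb{C}^* )^{n+1}\times_\mu(\mathbb{C}^* )^{n+1}$, identified via global coordinates $(\theta,r,\eta)\in\mathbb{T}^{n+1}\times(\mathbb{R}_{>0})^{n+1}\times\mathbb{T}^{n+1}$.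 On $P$ let $\tilde\omega_1=2\pi\sum_j r_j\,dr_j\wedge d\theta_j$, $\tilde\omega_2=\frac1{2\pi}\sum_j\frac1{r_j}dr_j\wedge d\eta_j$, $\tilde g=\sum_j\big(dr_j^2+4\pi^2r_j^2d\theta_j^2+\frac{1}{4\pi^2r_j^2}d\eta_j^2\big)$, $\tilde\omega_D=\sum_jd\theta_j\wedge d\eta_j$. The group $\mathbb{T}^{n+1}\times\mathbb{T}^{n+1}$ acts on $P$ by translation of $\theta$ and of $\eta$ respectively. Define $\mu_1,\mu_2:P\to\mathbb{R}$ by $\mu_1=-\pi\sum_{j}r_j^2$ and $\mu_2=-\frac1{2\pi}\log\big(\prod_j r_j\big)$. *)

theory Defs
  imports Complex_Main
begin

text \<open>Coordinates on P: a point is a triple (theta, r, eta) of functions nat => real,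
  of which only the coordinates j in {1..n+1} are meaningful.  The torus T^k = R^k/Z^k is
  represented by real representatives, compared modulo integers.  Tangent vectors at a
  point are triples (d theta, d r, d eta) of the same shape.\<close>

type_synonym vec = "nat \<Rightarrow> real"
type_synonym pt = "vec \<times> vec \<times> vec"

definition idx :: "nat \<Rightarrow> nat set" where
  "idx n = {1..n+1}"

definition th :: "pt \<Rightarrow> vec" where "th p = fst p"
definition rr :: "pt \<Rightarrow> vec" where "rr p = fst (snd p)"
definition et :: "pt \<Rightarrow> vec" where "et p = snd (snd p)"

definition teq :: "nat \<Rightarrow> vec \<Rightarrow> vec \<Rightarrow> bool" where
  "teq n x y \<longleftrightarrow> (\<forall>j\<in>idx n. x j - y j \<in> \<int>)"

text \<open>The vectors u_i, v_i in R^n (coordinates k in {1..n}), i in {1..n+1}.\<close>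
definition uvec :: "nat \<Rightarrow> nat \<Rightarrow> vec" where
  "uvec n i = (if i \<le> n then (\<lambda>k. if k = i then 1 else 0) else (\<lambda>k. -1))"

definition vvec :: "nat \<Rightarrow> nat \<Rightarrow> vec" where
  "vvec n i = (if i \<le> n then (\<lambda>k. real (n+1) * (if k = i then 1 else 0) - 1) else (\<lambda>k. -1))"

definition linmap :: "(nat \<Rightarrow> nat \<Rightarrow> vec) \<Rightarrow> nat \<Rightarrow> vec \<Rightarrow> vec" where
  "linmap w n x = (\<lambda>k. \<Sum>i\<in>idx n. x i * w n i k)"

text \<open>Kernel of the induced homomorphism T^(n+1) -> T^n, as a set of representatives.\<close>
definition torus_kernel :: "(nat \<Rightarrow> nat \<Rightarrow> vec) \<Rightarrow> nat \<Rightarrow> vec set" where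
  "torus_kernel w n = {x. \<forall>k\<in>{1..n}. linmap w n x k \<in> \<int>}"

definition N_Delta :: "nat \<Rightarrow> vec set" where "N_Delta n = torus_kernel uvec n"
definition N_Delta_star :: "nat \<Rightarrow> vec set" where "N_Delta_star n = torus_kernel vvec n"

definition Pset :: "nat \<Rightarrow> pt set" where
  "Pset n = {p. \<forall>j\<in>idx n. rr p j > 0}"

definition peq :: "nat \<Rightarrow> pt \<Rightarrow> pt \<Rightarrow> bool" where
  "peq n p q \<longleftrightarrow> teq n (th p) (th q) \<and> (\<forall>j\<in>idx n. rr p j = rr q j) \<and> teq n (et p) (et q)"

definition act :: "vec \<times> vec \<Rightarrow> pt \<Rightarrow> pt" where
  "act g p = ((\<lambda>j. th p j + fst g j), rr p, (\<lambda>j. et p j + snd g j))"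

definition padd :: "pt \<Rightarrow> real \<Rightarrow> pt \<Rightarrow> pt" where
  "padd p t v = ((\<lambda>j. th p j + t * th v j), (\<lambda>j. rr p j + t * rr v j), (\<lambda>j. et p j + t * et v j))"

definition pushforward :: "nat \<Rightarrow> (pt \<Rightarrow> pt) \<Rightarrow> pt \<Rightarrow> pt \<Rightarrow> pt \<Rightarrow> bool" where
  "pushforward n \<phi> p v w \<longleftrightarrow> (\<forall>j\<in>idx n.
      ((\<lambda>t. th (\<phi> (padd p t v)) j) has_real_derivative th w j) (at 0) \<and>
      ((\<lambda>t. rr (\<phi> (padd p t v)) j) has_real_derivative rr w j) (at 0) \<and>
      ((\<lambda>t. et (\<phi> (padd p t v)) j) has_real_derivative et w j) (at 0))"

definition preserves :: "nat \<Rightarrow> (pt \<Rightarrow> pt) \<Rightarrow> (pt \<Rightarrow> pt \<Rightarrow> pt \<Rightarrow> real) \<Rightarrow> bool" where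
  "preserves n \<phi> T \<longleftrightarrow> (\<forall>p\<in>Pset n.
      (\<forall>v. \<exists>v'. pushforward n \<phi> p v v') \<and>
      (\<forall>v v' w w'. pushforward n \<phi> p v v' \<longrightarrow> pushforward n \<phi> p w w' \<longrightarrow>
          T (\<phi> p) v' w' = T p v w))"

text \<open>Forms and metric; convention (alpha wedge beta)(v,w) = alpha v * beta w - alpha w * beta v.\<close>
definition omega1 :: "nat \<Rightarrow> pt \<Rightarrow> pt \<Rightarrow> pt \<Rightarrow> real" where
  "omega1 n p v w = 2 * pi * (\<Sum>j\<in>idx n. rr p j * (rr v j * th w j - rr w j * th v j))"

definition omega2 :: "nat \<Rightarrow> pt \<Rightarrow> pt \<Rightarrow> pt \<Rightarrow> real" where
  "omega2 n p v w = 1 / (2 * pi) * (\<Sum>j\<in>idx n. (1 / rr p j) * (rr v j * et w j - rr w j * et v j))"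

definition gmetric :: "nat \<Rightarrow> pt \<Rightarrow> pt \<Rightarrow> pt \<Rightarrow> real" where
  "gmetric n p v w = (\<Sum>j\<in>idx n. rr v j * rr w j + 4 * pi\<^sup>2 * (rr p j)\<^sup>2 * th v j * th w j
       + 1 / (4 * pi\<^sup>2 * (rr p j)\<^sup>2) * et v j * et w j)"

definition omegaD :: "nat \<Rightarrow> pt \<Rightarrow> pt \<Rightarrow> pt \<Rightarrow> real" where
  "omegaD n p v w = (\<Sum>j\<in>idx n. th v j * et w j - th w j * et v j)"

definition mu1 :: "nat \<Rightarrow> pt \<Rightarrow> real" where
  "mu1 n p = - pi * (\<Sum>j\<in>idx n. (rr p j)\<^sup>2)"

definition mu2 :: "nat \<Rightarrow> pt \<Rightarrow> real" where
  "mu2 n p = - (1 / (2 * pi)) * ln (\<Prod>j\<in>idx n. rr p j)"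

definition dfun :: "(pt \<Rightarrow> real) \<Rightarrow> pt \<Rightarrow> pt \<Rightarrow> real \<Rightarrow> bool" where
  "dfun f p v d \<longleftrightarrow> ((\<lambda>t. f (padd p t v)) has_real_derivative d) (at 0)"

text \<open>(df wedge dh) at p is nonzero: it is nonzero on some pair of tangent vectors.\<close>
definition wedge_nonzero :: "(pt \<Rightarrow> real) \<Rightarrow> (pt \<Rightarrow> real) \<Rightarrow> pt \<Rightarrow> bool" where
  "wedge_nonzero f h p \<longleftrightarrow> (\<exists>v w a b c d. dfun f p v a \<and> dfun f p w b \<and> dfun h p v c \<and> dfun h p w d
       \<and> a * d - b * c \<noteq> 0)"

end

theory Submission
  imports Defs "HOL-Analysis.Convex"
begin

text \<open>The torus acts by translating the angles \<theta> and \<eta>, whereas the four tensors and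
  both moment maps only see the radii and the components of tangent vectors; so
  invariance is immediate, and even the whole torus acts freely.
  On \<open>P\<close> the quantity \<open>(-\<mu>\<^sub>1/\<pi>) e\<^bsup>4\<pi>\<mu>\<^sub>2/(n+1)\<^esup>\<close> equals
  \<open>\<Sum> r\<^sub>j\<^sup>2 / (\<Prod> r\<^sub>j)\<^bsup>2/(n+1)\<^esup>\<close>, which by AM-GM is at least \<open>n + 1\<close>, with value \<open>n + 1\<close>
  when all radii coincide. Conversely radii of the form \<open>(a, \<dots>, a, b)\<close> with prescribed
  \<open>\<Sum> r\<^sub>j\<^sup>2\<close> and \<open>\<Prod> r\<^sub>j\<close> exist by the intermediate value theorem as soon as the AM-GM
  bound allows it. Finally \<open>d\<mu>\<^sub>1 \<wedge> d\<mu>\<^sub>2 (\<partial>\<^sub>r\<^sub>i, \<partial>\<^sub>r\<^sub>k)\<close> is a nonzero multiple of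
  \<open>r\<^sub>i/r\<^sub>k - r\<^sub>k/r\<^sub>i\<close>, which vanishes for all \<open>i, k\<close> only on the diagonal.\<close>

lemma finite_idx [simp]: "finite (idx n)"
  and card_idx [simp]: "card (idx n) = n + 1"
  by (simp_all add: idx_def)

lemma idx_eq_insert: "idx n = insert (n + 1) {1..n}"
  by (auto simp: idx_def)

lemma rr_pos: "p \<in> Pset n \<Longrightarrow> j \<in> idx n \<Longrightarrow> rr p j > 0"
  by (simp add: Pset_def)

lemma act_coords [simp]:
  "th (act g p) j = th p j + fst g j"
  "rr (act g p) = rr p"
  "et (act g p) j = et p j + snd g j"
  by (simp_all add: act_def th_def rr_def et_def)

lemma padd_coords [simp]:
  "th (padd p t v) j = th p j + t * th v j"
  "rr (padd p t v) j = rr p j + t * rr v j"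
  "et (padd p t v) j = et p j + t * et v j"
  by (simp_all add: padd_def th_def rr_def et_def)

definition tangent_eq :: "nat \<Rightarrow> pt \<Rightarrow> pt \<Rightarrow> bool" where
  "tangent_eq n v w \<longleftrightarrow> (\<forall>j\<in>idx n. th v j = th w j \<and> rr v j = rr w j \<and> et v j = et w j)"

lemma pushforward_act_iff: "pushforward n (act g) p v w \<longleftrightarrow> tangent_eq n v w"
proof -
  have affine_deriv: "((\<lambda>t. c + t * x + d) has_real_derivative y) (at 0) \<longleftrightarrow> y = x"
    for c d x y :: real
  proof -
    have "((\<lambda>t. c + t * x + d) has_real_derivative x) (at 0)"
      by (auto intro!: derivative_eq_intros)
    then show ?thesis
      using DERIV_unique by blast
  qed
  show ?thesis
    using affine_deriv[where d = 0] unfolding pushforward_def tangent_eq_def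
    by (auto simp: affine_deriv)
qed

lemma preserves_act:
  assumes "\<And>p v w. T (act g p) v w = T p v w"
    and "\<And>p v v' w w'. tangent_eq n v v' \<Longrightarrow> tangent_eq n w w' \<Longrightarrow> T p v' w' = T p v w"
  shows "preserves n (act g) T"
  unfolding preserves_def pushforward_act_iff
proof (intro ballI conjI allI impI)
  fix v
  show "\<exists>v'. tangent_eq n v v'"
    by (rule exI[of _ v]) (simp add: tangent_eq_def)
next
  fix p v v' w w'
  assume "tangent_eq n v v'" "tangent_eq n w w'"
  then show "T (act g p) v' w' = T p v w"
    using assms by simp
qed

lemma preserves_act_tensors:
  "preserves n (act g) (omega1 n)"
  "preserves n (act g) (omega2 n)"
  "preserves n (act g) (gmetric n)"
  "preserves n (act g) (omegaD n)"
  by (rule preserves_act; auto simp: omega1_def omega2_def gmetric_def omegaD_def tangent_eq_def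
      intro!: sum.cong)+

text \<open>The whole torus acts freely.\<close>
lemma act_fixed_point_imp_trivial:
  "peq n (act g p) p \<Longrightarrow> teq n (fst g) (\<lambda>_. 0) \<and> teq n (snd g) (\<lambda>_. 0)"
  by (simp add: peq_def teq_def)

lemma mu1_act [simp]: "mu1 n (act g p) = mu1 n p"
  and mu2_act [simp]: "mu2 n (act g p) = mu2 n p"
  by (simp_all add: mu1_def mu2_def)

definition radius_ratio :: "nat \<Rightarrow> vec \<Rightarrow> real" where
  "radius_ratio n r = (\<Sum>j\<in>idx n. (r j)\<^sup>2) / (\<Prod>j\<in>idx n. r j) powr (2 / real (n + 1))"

lemma level_function_eq_radius_ratio:
  assumes "p \<in> Pset n"
  shows "(- mu1 n p / pi) * exp (4 * pi / real (n + 1) * mu2 n p) = radius_ratio n (rr p)"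
proof -
  define P where "P = (\<Prod>j\<in>idx n. rr p j)"
  have "P > 0"
    unfolding P_def using assms by (intro prod_pos) (simp add: rr_pos)
  have exponent: "4 * pi / m * mu2 n p = - (2 / m) * ln P" for m
    \<comment> \<open>generic \<open>m\<close>, so that the simplifier cannot split \<open>real (n + 1)\<close>\<close>
    by (simp add: mu2_def P_def)
  have "exp (4 * pi / real (n + 1) * mu2 n p) = exp (- (2 / real (n + 1)) * ln P)"
    by (simp only: exponent)
  also have "\<dots> = P powr (- (2 / real (n + 1)))"
    using \<open>P > 0\<close> by (simp add: powr_def)
  also have "\<dots> = 1 / P powr (2 / real (n + 1))"
    by (rule powr_minus_divide)
  finally show ?thesis
    by (simp add: mu1_def radius_ratio_def P_def)
qed

lemma sum_squares_ge_prod_powr: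
  fixes r :: "'a \<Rightarrow> real"
  assumes "finite A" "A \<noteq> {}" "\<And>j. j \<in> A \<Longrightarrow> r j \<ge> 0"
  shows "real (card A) * (\<Prod>j\<in>A. r j) powr (2 / card A) \<le> (\<Sum>j\<in>A. (r j)\<^sup>2)"
proof -
  have "(\<Prod>j\<in>A. (r j)\<^sup>2) powr (1 / card A) \<le> (\<Sum>j\<in>A. (r j)\<^sup>2 / card A)"
    using assms by (intro arith_geom_mean) auto
  also have "(\<Prod>j\<in>A. (r j)\<^sup>2) = (\<Prod>j\<in>A. r j) powr 2"
    using assms by (simp add: prod_power_distrib prod_nonneg)
  finally show ?thesis
    using assms by (simp add: powr_powr sum_divide_distrib[symmetric] field_simps card_gt_0_iff)
qed

lemma radius_ratio_ge:
  assumes "\<And>j. j \<in> idx n \<Longrightarrow> r j > 0"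
  shows "radius_ratio n r \<ge> real (n + 1)"
proof -
  define P where "P = (\<Prod>j\<in>idx n. r j) powr (2 / real (n + 1))"
  have "P > 0"
    unfolding P_def using assms by (simp add: prod_pos less_imp_neq[symmetric])
  moreover have "real (n + 1) * P \<le> (\<Sum>j\<in>idx n. (r j)\<^sup>2)"
    unfolding P_def using sum_squares_ge_prod_powr[of "idx n" r] assms
    by (fastforce simp: idx_def)
  ultimately show ?thesis
    unfolding radius_ratio_def P_def[symmetric] by (simp add: pos_le_divide_eq)
qed

lemma radius_ratio_const:
  assumes "\<And>j. j \<in> idx n \<Longrightarrow> r j = c" and "c > 0"
  shows "radius_ratio n r = real (n + 1)"
proof -
  have "(\<Prod>j\<in>idx n. r j) = c ^ (n + 1)"
    using assms(1) by simp
  also have "\<dots> = c powr real (n + 1)"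
    using assms(2) by (rule powr_realpow[symmetric])
  finally have "(\<Prod>j\<in>idx n. r j) powr (2 / real (n + 1))
      = c powr (real (n + 1) * (2 / real (n + 1)))"
    by (simp only: powr_powr)
  also have "real (n + 1) * (2 / real (n + 1)) = 2"
    by (simp add: field_simps)
  finally have "(\<Prod>j\<in>idx n. r j) powr (2 / real (n + 1)) = c\<^sup>2"
    using assms(2) by simp
  moreover have "(\<Sum>j\<in>idx n. (r j)\<^sup>2) = real (n + 1) * c\<^sup>2"
    using assms(1) by simp
  ultimately show ?thesis
    using assms(2) by (simp add: radius_ratio_def)
qed

lemma level_set_imp_bound:
  assumes "p \<in> Pset n" "mu1 n p = k1" "mu2 n p = k2"
  shows "(- k1 / pi) * exp (4 * pi / real (n + 1) * k2) \<ge> real (n + 1)"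
  using level_function_eq_radius_ratio[OF assms(1)] radius_ratio_ge[of n "rr p"] assms
  by (simp add: rr_pos)

definition radial :: "vec \<Rightarrow> pt" where
  "radial r = ((\<lambda>_. 0), r, (\<lambda>_. 0))"

lemma rr_radial [simp]: "rr (radial r) = r"
  by (simp add: radial_def rr_def)

lemma sum_squares_prod_attained:
  assumes "n \<ge> 1" "c > 0" "real (n + 1) * c\<^sup>2 \<le> s"
  obtains a b :: real where "a > 0" "b > 0" "real n * a\<^sup>2 + b\<^sup>2 = s" "a ^ n * b = c ^ (n + 1)"
proof -
  define f where "f a = real n * a\<^sup>2 + (c ^ (n + 1) / a ^ n)\<^sup>2" for a :: real
  have "c ^ (n + 1) / c ^ n = c"
    using assms(2) by simp
  then have "f c = real (n + 1) * c\<^sup>2"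
    by (simp add: f_def distrib_right)
  then have "f c \<le> s"
    using assms(3) by simp
  have "c\<^sup>2 \<le> real (n + 1) * c\<^sup>2"
    using mult_right_mono[of 1 "real (n + 1)" "c\<^sup>2"] by simp
  then have "c\<^sup>2 \<le> s" "0 \<le> s"
    using assms(3) zero_le_power2[of c] by linarith+
  then have "c \<le> sqrt s"
    by (intro real_le_rsqrt)
  have "s \<le> real n * s"
    using assms(1) \<open>0 \<le> s\<close> by (simp add: mult_le_cancel_right1)
  then have "s \<le> f (sqrt s)"
    using \<open>0 \<le> s\<close> by (simp add: f_def add_increasing2)
  moreover have "\<forall>x. c \<le> x \<and> x \<le> sqrt s \<longrightarrow> isCont f x"
    using assms(2) unfolding f_def by (auto intro!: continuous_intros)
  ultimately obtain a where "c \<le> a" "f a = s"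
    using IVT[of f c s "sqrt s"] \<open>f c \<le> s\<close> \<open>c \<le> sqrt s\<close> by blast
  moreover have "a > 0"
    using assms(2) \<open>c \<le> a\<close> by simp
  ultimately show thesis
    using assms(2) by (intro that[of a "c ^ (n + 1) / a ^ n"]) (simp_all add: f_def)
qed

lemma bound_imp_level_set_nonempty:
  assumes "n \<ge> 1" "k1 < 0" "(- k1 / pi) * exp (4 * pi / real (n + 1) * k2) \<ge> real (n + 1)"
  shows "\<exists>p\<in>Pset n. mu1 n p = k1 \<and> mu2 n p = k2"
proof -
  define s c where "s = - k1 / pi" and "c = exp (- 2 * pi * k2 / real (n + 1))"
  have "exp (4 * pi / real (n + 1) * k2) * c\<^sup>2 = 1"
    by (simp add: c_def field_simps flip: exp_add exp_of_nat_mult)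
  then have "real (n + 1) * c\<^sup>2 \<le> s"
    using mult_right_mono[OF assms(3), of "c\<^sup>2"] by (simp add: s_def mult.assoc)
  then obtain a b where ab: "a > 0" "b > 0" "real n * a\<^sup>2 + b\<^sup>2 = s" "a ^ n * b = c ^ (n + 1)"
    using sum_squares_prod_attained[OF assms(1)] by (metis c_def exp_gt_zero)
  define p where "p = radial (\<lambda>j. if j \<le> n then a else b)"
  have "p \<in> Pset n"
    using ab by (auto simp: Pset_def p_def)
  moreover have "mu1 n p = - pi * (real n * a\<^sup>2 + b\<^sup>2)"
    by (simp add: mu1_def p_def idx_eq_insert algebra_simps)
  then have "mu1 n p = k1"
    using ab(3) by (simp add: s_def)
  moreover have "mu2 n p = - (1 / (2 * pi)) * ln (a ^ n * b)"
    by (simp add: mu2_def p_def idx_eq_insert mult.commute)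
  then have "mu2 n p = k2"
    using ab(4) by (simp add: c_def ln_realpow del: power_Suc)
  ultimately show ?thesis
    by blast
qed

definition partial_r :: "nat \<Rightarrow> pt" where
  "partial_r i = radial (\<lambda>j. of_bool (j = i))"

lemma dfun_mu1_partial_r:
  assumes "i \<in> idx n"
  shows "dfun (mu1 n) p (partial_r i) (- 2 * pi * rr p i)"
  using assms unfolding dfun_def mu1_def partial_r_def
  by (auto intro!: derivative_eq_intros simp flip: sum_distrib_left)

lemma dfun_mu2_partial_r:
  assumes "i \<in> idx n" "p \<in> Pset n"
  shows "dfun (mu2 n) p (partial_r i) (- 1 / (2 * pi * rr p i))"
  using assms unfolding dfun_def mu2_def partial_r_def
  by (auto intro!: derivative_eq_intros has_field_derivative_prod' prod_pos
      simp: rr_pos less_imp_neq[OF rr_pos, symmetric])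
    (simp add: of_bool_def if_distrib[of "\<lambda>x. x / y" for y] cong: if_cong)

lemma wedge_nonzero_if_radii_differ:
  assumes "p \<in> Pset n" "i \<in> idx n" "k \<in> idx n" "rr p i \<noteq> rr p k"
  shows "wedge_nonzero (mu1 n) (mu2 n) p"
proof -
  have ri: "rr p i > 0" and rk: "rr p k > 0"
    using assms by (simp_all add: rr_pos)
  have "(- 2 * pi * rr p i) * (- 1 / (2 * pi * rr p k))
      - (- 2 * pi * rr p k) * (- 1 / (2 * pi * rr p i)) = rr p i / rr p k - rr p k / rr p i"
    by simp
  also have "\<dots> \<noteq> 0"
  proof
    assume "rr p i / rr p k - rr p k / rr p i = 0"
    then have "(rr p i)\<^sup>2 = (rr p k)\<^sup>2"
      using ri rk by (simp add: frac_eq_eq power2_eq_square)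
    then show False
      using ri rk assms(4) by (simp add: power2_eq_iff_nonneg)
  qed
  finally show ?thesis
    unfolding wedge_nonzero_def
    using dfun_mu1_partial_r[OF assms(2)] dfun_mu1_partial_r[OF assms(3)]
      dfun_mu2_partial_r[OF assms(2,1)] dfun_mu2_partial_r[OF assms(3,1)]
    by blast
qed

lemma wedge_nonzero_if_radius_ratio_gt:
  assumes "p \<in> Pset n" "radius_ratio n (rr p) > real (n + 1)"
  shows "wedge_nonzero (mu1 n) (mu2 n) p"
proof (rule ccontr)
  assume "\<not> wedge_nonzero (mu1 n) (mu2 n) p"
  have "1 \<in> idx n"
    by (simp add: idx_def)
  have radii_eq: "rr p j = rr p 1" if "j \<in> idx n" for j
    using wedge_nonzero_if_radii_differ[OF assms(1) that \<open>1 \<in> idx n\<close>]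
      \<open>\<not> wedge_nonzero (mu1 n) (mu2 n) p\<close> by blast
  have "radius_ratio n (rr p) = real (n + 1)"
    by (rule radius_ratio_const[OF radii_eq rr_pos[OF assms(1) \<open>1 \<in> idx n\<close>]])
  then show False
    using assms(2) by simp
qed

theorem mainTheorem5:
  fixes n :: nat
  assumes "n \<ge> 1"
  shows
   "(\<forall>g\<in>N_Delta n \<times> N_Delta_star n.
        (\<forall>p\<in>Pset n. peq n (act g p) p \<longrightarrow> teq n (fst g) (\<lambda>_. 0) \<and> teq n (snd g) (\<lambda>_. 0))
      \<and> preserves n (act g) (omega1 n) \<and> preserves n (act g) (omega2 n)
      \<and> preserves n (act g) (gmetric n) \<and> preserves n (act g) (omegaD n)
      \<and> (\<forall>p\<in>Pset n. mu1 n (act g p) = mu1 n p \<and> mu2 n (act g p) = mu2 n p))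
    \<and> (\<forall>k1 k2 :: real. k1 < 0 \<longrightarrow>
        ({p\<in>Pset n. mu1 n p = k1 \<and> mu2 n p = k2} \<noteq> {} \<longleftrightarrow>
         (- k1 / pi) * exp (4 * pi / real (n + 1) * k2) \<ge> real (n + 1)))
    \<and> (\<forall>k1 k2 :: real. (- k1 / pi) * exp (4 * pi / real (n + 1) * k2) > real (n + 1) \<longrightarrow>
        (\<forall>p\<in>{p\<in>Pset n. mu1 n p = k1 \<and> mu2 n p = k2}. wedge_nonzero (mu1 n) (mu2 n) p))"
  apply (intro conjI)
  subgoal
    by (simp add: act_fixed_point_imp_trivial preserves_act_tensors)
  subgoal
    using level_set_imp_bound bound_imp_level_set_nonempty[OF assms] by blast
  subgoal
    using level_function_eq_radius_ratio wedge_nonzero_if_radius_ratio_gt by auto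
  done

end
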